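(* Let $J,L\subseteq S$ with $n:=\#J\ge2$, $J\setminus\{j_1,j_n\}=L\setminus\{l_1\}$ and $j_1<l_1$. Then in $A$: $$\tau^-_J-\tau^-_Lt_{j_n}-\sum_{i=2}^{n-1}(-1)^i\tau^-_{(J\cup L)\setminus\{j_i\}}+(-1)^nt_{j_1}\tau^-_L=0.$$
   Context: $S$ is a finite set with a total order $<$, $R$ a commutative ring with $1$, $q\in R$, $A=R\langle t_s\mid s\in S\rangle$ the free associative algebra. Subsets are enumerated increasingly: $J=\{j_1<\dots<j_{\#J}\}$, $L=\{l_1<\dots\}$. $t_J=t_{j_1}\cdots t_{j_{\#J}}$; for $I=\{j_{\alpha_1}<\dots<j_{\alpha_{\#I}}\}\subseteq J$, $\ell_J(I)=\sum_\nu(\alpha_\nu-\nu)$; $\tau^-_J=\sum_{I\subseteq J,\ \#I\text{ odd}}(-1)^{\ell_J(I)}(-q)^{(\#I-1)/2}t_{J\setminus I}$. *)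

theory Defs
  imports Main
begin

text \<open>Free associative algebra R<t_s | s in S>: an element is represented by its
coefficient function on words (lists of generators); the product is the
concatenation convolution.\<close>

type_synonym ('a, 'r) falg = "'a list \<Rightarrow> 'r"

definition fa_zero :: "('a, 'r::comm_ring_1) falg" where
  "fa_zero = (\<lambda>w. 0)"

definition fa_add :: "('a, 'r::comm_ring_1) falg \<Rightarrow> ('a, 'r) falg \<Rightarrow> ('a, 'r) falg" where
  "fa_add f g = (\<lambda>w. f w + g w)"

definition fa_sub :: "('a, 'r::comm_ring_1) falg \<Rightarrow> ('a, 'r) falg \<Rightarrow> ('a, 'r) falg" where
  "fa_sub f g = (\<lambda>w. f w - g w)"

definition fa_smult :: "'r::comm_ring_1 \<Rightarrow> ('a, 'r) falg \<Rightarrow> ('a, 'r) falg" where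
  "fa_smult c f = (\<lambda>w. c * f w)"

definition fa_sum :: "('b \<Rightarrow> ('a, 'r::comm_ring_1) falg) \<Rightarrow> 'b set \<Rightarrow> ('a, 'r) falg" where
  "fa_sum F X = (\<lambda>w. \<Sum>x\<in>X. F x w)"

definition fa_mult :: "('a, 'r::comm_ring_1) falg \<Rightarrow> ('a, 'r) falg \<Rightarrow> ('a, 'r) falg" where
  "fa_mult f g = (\<lambda>w. \<Sum>k\<le>length w. f (take k w) * g (drop k w))"

definition fa_mono :: "'a list \<Rightarrow> ('a, 'r::comm_ring_1) falg" where
  "fa_mono u = (\<lambda>w. if w = u then 1 else 0)"

text \<open>t_J = t_{j_1} ... t_{j_#J} with J enumerated increasingly.\<close>
definition tJ :: "'a::linorder set \<Rightarrow> ('a, 'r::comm_ring_1) falg" where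
  "tJ J = fa_mono (sorted_list_of_set J)"

text \<open>j_i, the i-th smallest element of J (1-based).\<close>
definition elt :: "'a::linorder set \<Rightarrow> nat \<Rightarrow> 'a" where
  "elt J i = sorted_list_of_set J ! (i - 1)"

text \<open>ell_J(I) = sum_nu (alpha_nu - nu), where I = {j_{alpha_1} < ... } (1-based positions);
  alpha_nu is the rank of the nu-th element of I within J.\<close>
definition ellJ :: "'a::linorder set \<Rightarrow> 'a set \<Rightarrow> nat" where
  "ellJ J I = (\<Sum>\<nu>\<in>{1..card I}.
      card {j\<in>J. j \<le> elt I \<nu>} - \<nu>)"

definition tau_minus :: "'r::comm_ring_1 \<Rightarrow> 'a::linorder set \<Rightarrow> ('a, 'r) falg" where
  "tau_minus q J = fa_sum (\<lambda>I. fa_smult ((-1) ^ ellJ J I * (- q) ^ ((card I - 1) div 2)) (tJ (J - I)))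
       {I. I \<subseteq> J \<and> odd (card I)}"

end

theory Submission
  imports Defs
begin

text \<open>
  At a word w, tau^-_X vanishes unless w is strictly increasing with letter set W \<subseteq> X and
  X - W of odd size; its value is then (-1)^k (-q)^((|X - W| - 1) / 2), where k counts the pairs
  v < y with v kept (in W) and y deleted (in X - W). Let U have least element a and greatest
  element d. In the alternating sum over interior letters u of the deletions U - {u}, only
  u \<notin> W contribute, each equal to a common factor times (-1)^(rank of u in U - W). These signs
  alternate, so the sum collapses to the contributions of the two end letters, which are
  the values at w of t_a tau^-_(U - {a, d}) and tau^-_(U - {a, d}) t_d. For U = J \<union> L one has
  U - {a, d} = L, which is the lemma for n \<ge> 3; for n = 2 it says tau^-_{a, d} = t_d - t_a.
\<close>

definition inversions :: "'a::linorder set \<Rightarrow> 'a set \<Rightarrow> nat" where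
  "inversions X W = (\<Sum>y\<in>X - W. card {w\<in>W. w < y})"

definition tau_coeff :: "'r::comm_ring_1 \<Rightarrow> 'a::linorder set \<Rightarrow> 'a set \<Rightarrow> 'r" where
  "tau_coeff q X W = (if W \<subseteq> X \<and> odd (card (X - W))
     then (-1) ^ inversions X W * (- q) ^ ((card (X - W) - 1) div 2) else 0)"

lemma tau_coeff_eq_0_if_not_subset: "\<not> W \<subseteq> X \<Longrightarrow> tau_coeff q X W = 0"
  by (simp add: tau_coeff_def)

lemma card_le_nth_sorted_list_of_set:
  assumes "finite I" "k < card I"
  shows "card {j\<in>I. j \<le> sorted_list_of_set I ! k} = Suc k"
proof -
  let ?s = "sorted_list_of_set I"
  have strict: "sorted_wrt (<) ?s" and len: "length ?s = card I" by simp_all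
  have "{j\<in>I. j \<le> ?s ! k} = (\<lambda>i. ?s ! i) ` {..k}"
  proof (intro equalityI subsetI)
    fix x assume "x \<in> {j\<in>I. j \<le> ?s ! k}"
    then have "x \<in> set ?s" and le: "x \<le> ?s ! k" using assms by simp_all
    then obtain i where i: "i < card I" "?s ! i = x" by (auto simp: in_set_conv_nth)
    have "i \<le> k"
      using i le assms strict len by (metis leD leI sorted_wrt_nth_less)
    then show "x \<in> (\<lambda>i. ?s ! i) ` {..k}" using i by blast
  next
    fix x assume "x \<in> (\<lambda>i. ?s ! i) ` {..k}"
    then obtain i where i: "i \<le> k" "x = ?s ! i" by blast
    then have "x \<in> set ?s" using assms len by (metis le_less_trans nth_mem)
    moreover have "x \<le> ?s ! k"
      using i assms strict len by (auto simp: sorted_wrt_iff_nth_less le_less)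
    ultimately show "x \<in> {j\<in>I. j \<le> ?s ! k}" using assms by simp
  qed
  moreover have "inj_on (\<lambda>i. ?s ! i) {..k}"
    using assms len by (intro inj_on_nth) auto
  ultimately show ?thesis by (simp add: card_image)
qed

lemma card_le_elt:
  assumes "finite X" "1 \<le> i" "i \<le> card X"
  shows "card {j\<in>X. j \<le> elt X i} = i"
  using card_le_nth_sorted_list_of_set[OF assms(1), of "i - 1"] assms by (simp add: elt_def)

lemma bij_betw_elt:
  assumes "finite X"
  shows "bij_betw (elt X) {1..card X} X"
proof -
  have "bij_betw (\<lambda>i. sorted_list_of_set X ! i) {..<card X} X"
    using assms bij_betw_nth[of "sorted_list_of_set X"] by (simp add: lessThan_atLeast0)
  moreover have "bij_betw (\<lambda>i. i - 1) {1..card X} {..<card X}"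
    by (rule bij_betw_byWitness[where f' = Suc]) auto
  ultimately show ?thesis
    using bij_betw_trans unfolding elt_def[abs_def] comp_def by blast
qed

lemma elt_1_eq_Min: "finite X \<Longrightarrow> X \<noteq> {} \<Longrightarrow> elt X 1 = Min X"
  by (simp add: elt_def sorted_list_of_set_nonempty)

lemma elt_card_eq_Max:
  assumes "finite X" "X \<noteq> {}"
  shows "elt X (card X) = Max X"
proof (rule Max_eqI[symmetric, OF assms(1)])
  have pos: "1 \<le> card X" using assms by (simp add: Suc_leI card_gt_0_iff)
  then show "elt X (card X) \<in> X"
    using bij_betw_elt[OF assms(1)] by (auto simp: bij_betw_def)
  have "{j\<in>X. j \<le> elt X (card X)} = X"
    using card_le_elt[OF assms(1) pos] assms(1) by (intro card_subset_eq) auto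
  then show "y \<le> elt X (card X)" if "y \<in> X" for y
    using that by blast
qed

lemma bij_betw_elt_interior:
  assumes "finite X" "2 \<le> card X"
  shows "bij_betw (elt X) {2..card X - 1} (X - {Min X, Max X})"
proof -
  have "X \<noteq> {}" using assms(2) by auto
  have ends: "elt X 1 = Min X" "elt X (card X) = Max X"
    using elt_1_eq_Min[OF assms(1) \<open>X \<noteq> {}\<close>] elt_card_eq_Max[OF assms(1) \<open>X \<noteq> {}\<close>] .
  have "bij_betw (elt X) {1, card X} {Min X, Max X}"
    using assms(2) ends by (intro bij_betw_subset[OF bij_betw_elt[OF assms(1)]]) auto
  then have "bij_betw (elt X) ({1..card X} - {1, card X}) (X - {Min X, Max X})"
    using bij_betw_elt[OF assms(1)] assms \<open>X \<noteq> {}\<close> by (intro bij_betw_DiffI) auto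
  moreover have "{1..card X} - {1, card X} = {2..card X - 1}" by auto
  ultimately show ?thesis by simp
qed

lemma ellJ_eq_inversions:
  assumes "finite X" "W \<subseteq> X"
  shows "ellJ X (X - W) = inversions X W"
proof -
  let ?I = "X - W"
  have fI: "finite ?I" using assms by simp
  have "ellJ X ?I = (\<Sum>\<nu>\<in>{1..card ?I}. card {w\<in>W. w < elt ?I \<nu>})"
    unfolding ellJ_def
  proof (rule sum.cong[OF refl])
    fix \<nu> assume \<nu>: "\<nu> \<in> {1..card ?I}"
    let ?y = "elt ?I \<nu>"
    have "?y \<in> ?I" using bij_betw_elt[OF fI] \<nu> by (auto simp: bij_betw_def)
    then have "{j\<in>X. j \<le> ?y} = {w\<in>W. w < ?y} \<union> {j\<in>?I. j \<le> ?y}"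
      and "{w\<in>W. w < ?y} \<inter> {j\<in>?I. j \<le> ?y} = {}"
      using assms(2) by (auto simp: le_less)
    then have "card {j\<in>X. j \<le> ?y} = card {w\<in>W. w < ?y} + card {j\<in>?I. j \<le> ?y}"
      using assms by (simp add: card_Un_disjoint finite_subset)
    then show "card {j\<in>X. j \<le> ?y} - \<nu> = card {w\<in>W. w < ?y}"
      using card_le_elt[OF fI] \<nu> by simp
  qed
  also have "\<dots> = inversions X W"
    unfolding inversions_def
    using sum.reindex_bij_betw[OF bij_betw_elt[OF fI], of "\<lambda>y. card {w\<in>W. w < y}"] by simp
  finally show ?thesis .
qed

lemma tau_minus_apply:
  assumes "finite X"
  shows "tau_minus q X w = (if sorted_wrt (<) w then tau_coeff q X (set w) else 0)"
proof -
  let ?c = "\<lambda>I. (-1) ^ ellJ X I * (- q) ^ ((card I - 1) div 2)"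
  have expand: "tau_minus q X w =
      (\<Sum>I\<in>{I. I \<subseteq> X \<and> odd (card I)}. if w = sorted_list_of_set (X - I) then ?c I else 0)"
    by (auto simp: tau_minus_def fa_sum_def fa_smult_def tJ_def fa_mono_def intro!: sum.cong)
  show ?thesis
  proof (cases "sorted_wrt (<) w \<and> set w \<subseteq> X")
    case True
    have "(w = sorted_list_of_set (X - I)) = (I = X - set w)" if "I \<subseteq> X" for I
    proof -
      have "(w = sorted_list_of_set (X - I)) = (set w = X - I)"
        using True assms sorted_list_of_set_unique[of "X - I" w]
        by (metis distinct_card finite_Diff strict_sorted_iff)
      then show ?thesis using that True by blast
    qed
    then have "tau_minus q X w =
        (\<Sum>I\<in>{I. I \<subseteq> X \<and> odd (card I)}. if I = X - set w then ?c I else 0)"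
      unfolding expand by (intro sum.cong) auto
    also have "\<dots> = (if odd (card (X - set w)) then ?c (X - set w) else 0)"
      using assms by (subst sum.delta) auto
    finally show ?thesis
      using True assms by (simp add: tau_coeff_def ellJ_eq_inversions)
  next
    case False
    then have "tau_minus q X w = 0"
      unfolding expand using assms by (intro sum.neutral) (auto simp: strict_sorted_list_of_set)
    then show ?thesis using False by (auto simp: tau_coeff_def)
  qed
qed

lemma inversions_delete_outside:
  assumes "finite X" "u \<in> X" "u \<notin> W"
  shows "inversions X W = inversions (X - {u}) W + card {w\<in>W. w < u}"
proof -
  have "X - {u} - W = (X - W) - {u}" by auto
  then show ?thesis
    unfolding inversions_def using assms by (simp add: sum.remove[of "X - W" u])
qed

lemma inversions_delete_inside:
  assumes "finite X" "W \<subseteq> X" "u \<in> W"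
  shows "inversions X W = inversions (X - {u}) (W - {u}) + card {y\<in>X - W. u < y}"
proof -
  have fW: "finite W" using assms finite_subset by blast
  have "card {w\<in>W. w < y} = card {w\<in>W - {u}. w < y} + of_bool (u < y)" for y
  proof (cases "u < y")
    case True
    then have "{w\<in>W. w < y} = insert u {w\<in>W - {u}. w < y}" using assms by auto
    then show ?thesis using True fW by simp
  next
    case False
    then have "{w\<in>W. w < y} = {w\<in>W - {u}. w < y}" by auto
    then show ?thesis using False by simp
  qed
  then have "inversions X W = (\<Sum>y\<in>X - W. card {w\<in>W - {u}. w < y} + of_bool (u < y))"
    unfolding inversions_def by simp
  also have "\<dots> = inversions (X - {u}) (W - {u}) + card {y\<in>X - W. u < y}"
  proof -
    have "X - {u} - (W - {u}) = X - W" using assms by auto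
    then show ?thesis
      unfolding inversions_def sum.distrib using assms by (simp add: Int_def)
  qed
  finally show ?thesis .
qed

lemma sum_neg_one_pow_rank:
  fixes Y :: "'a::linorder set"
  assumes "finite Y"
  shows "(\<Sum>u\<in>Y. (-1::'r::comm_ring_1) ^ card {y\<in>Y. y \<le> u}) = (if even (card Y) then 0 else -1)"
  using assms
proof (induction "card Y" arbitrary: Y)
  case 0
  then show ?case by simp
next
  case (Suc k)
  define M where "M = Max Y"
  have "Y \<noteq> {}" using Suc.hyps(2) by auto
  then have M: "M \<in> Y" "\<And>y. y \<in> Y \<Longrightarrow> y \<le> M"
    using Suc.prems by (auto simp: M_def)
  have "{y\<in>Y. y \<le> u} = {y\<in>Y - {M}. y \<le> u}" if "u \<in> Y - {M}" for u
    using that M by (auto dest: antisym)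
  then have "(\<Sum>u\<in>Y - {M}. (-1::'r) ^ card {y\<in>Y. y \<le> u})
      = (\<Sum>u\<in>Y - {M}. (-1) ^ card {y\<in>Y - {M}. y \<le> u})"
    by (intro sum.cong) simp_all
  also have "\<dots> = (if even k then 0 else -1)"
  proof -
    have "card (Y - {M}) = k" using Suc.hyps(2) M(1) by simp
    then show ?thesis using Suc.hyps(1)[of "Y - {M}"] Suc.prems by simp
  qed
  finally have rest: "(\<Sum>u\<in>Y - {M}. (-1::'r) ^ card {y\<in>Y. y \<le> u}) = (if even k then 0 else -1)" .
  have "{y\<in>Y. y \<le> M} = Y" using M by auto
  then show ?case
    using sum.remove[OF Suc.prems M(1), of "\<lambda>u. (-1::'r) ^ card {y\<in>Y. y \<le> u}"] rest
    by (simp flip: Suc.hyps(2))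
qed

lemma sum_neg_one_pow_rank_interior:
  fixes Y :: "'a::linorder set"
  assumes "finite Y" "even (card Y)" "a < d" "\<forall>y\<in>Y. a \<le> y \<and> y \<le> d"
  shows "(\<Sum>u\<in>Y - {a, d}. (-1::'r::comm_ring_1) ^ card {y\<in>Y. y \<le> u}) = of_bool (a \<in> Y) - of_bool (d \<in> Y)"
proof -
  let ?f = "\<lambda>u. (-1::'r) ^ card {y\<in>Y. y \<le> u}"
  have "a \<in> Y \<Longrightarrow> {y\<in>Y. y \<le> a} = {a}" and "d \<in> Y \<Longrightarrow> {y\<in>Y. y \<le> d} = Y"
    using assms(4) by (auto intro: antisym)
  then have ends: "a \<in> Y \<Longrightarrow> ?f a = -1" "d \<in> Y \<Longrightarrow> ?f d = 1"
    using assms(2) by simp_all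
  have total: "(\<Sum>u\<in>Y. ?f u) = 0"
    using sum_neg_one_pow_rank[OF assms(1)] assms(2) by simp
  have "Y - {a, d} = Y - {a} - {d}" by blast
  then have "(\<Sum>u\<in>Y - {a, d}. ?f u) = (\<Sum>u\<in>Y - {a} - {d}. ?f u)" by simp
  also have "\<dots> = of_bool (a \<in> Y) - of_bool (d \<in> Y)"
    using assms(1,3) by (simp only: sum_diff1 finite_Diff) (auto simp: total ends)
  finally show ?thesis .
qed

lemma tau_coeff_delete_outside:
  fixes q :: "'r::comm_ring_1"
  assumes "finite U" "W \<subseteq> U" "u \<in> U - W"
  shows "(-1) ^ card {x\<in>U. x \<le> u} * tau_coeff q (U - {u}) W =
    (if even (card (U - W))
     then (-1) ^ (inversions U W + card {y\<in>U - W. y \<le> u}) * (- q) ^ ((card (U - W) - 2) div 2)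
     else 0)"
proof -
  let ?Y = "U - W"
  have fW: "finite W" using assms finite_subset by blast
  have "{x\<in>U. x \<le> u} = {w\<in>W. w < u} \<union> {y\<in>?Y. y \<le> u}"
    and "{w\<in>W. w < u} \<inter> {y\<in>?Y. y \<le> u} = {}"
    using assms by (auto simp: le_less)
  then have rank: "card {x\<in>U. x \<le> u} = card {w\<in>W. w < u} + card {y\<in>?Y. y \<le> u}"
    using fW assms(1) by (simp add: card_Un_disjoint)
  have inv: "inversions U W = inversions (U - {u}) W + card {w\<in>W. w < u}"
    using inversions_delete_outside[OF assms(1)] assms(3) by blast
  have Y: "U - {u} - W = ?Y - {u}" "card (?Y - {u}) = card ?Y - 1" "card ?Y \<ge> 1"
    using assms by (auto intro: Suc_leI simp: card_gt_0_iff)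
  have "(-1) ^ card {x\<in>U. x \<le> u} * (-1) ^ inversions (U - {u}) W =
      ((-1) ^ (inversions U W + card {y\<in>?Y. y \<le> u}) :: 'r)"
    unfolding rank inv by (simp add: power_add ac_simps)
  moreover have "odd (card ?Y - 1) = even (card ?Y)" "card ?Y - 1 - 1 = card ?Y - 2"
    using Y(3) by auto
  ultimately show ?thesis
    using assms(2,3) Y by (auto simp: tau_coeff_def mult.assoc[symmetric])
qed

lemma sum_tau_coeff_delete_interior:
  fixes q :: "'r::comm_ring_1"
  assumes "finite U" "W \<subseteq> U" "a < d" "\<forall>x\<in>U. a \<le> x \<and> x \<le> d"
  shows "(\<Sum>u\<in>U - {a, d}. (-1) ^ card {x\<in>U. x \<le> u} * tau_coeff q (U - {u}) W) =
    (if even (card (U - W))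
     then (-1) ^ inversions U W * (- q) ^ ((card (U - W) - 2) div 2)
          * (of_bool (a \<in> U - W) - of_bool (d \<in> U - W))
     else 0)"
proof -
  let ?Y = "U - W" and ?c = "(-1) ^ inversions U W * (- q) ^ ((card (U - W) - 2) div 2)"
  let ?f = "\<lambda>u. (-1) ^ card {x\<in>U. x \<le> u} * tau_coeff q (U - {u}) W"
  have "?f u = 0" if "u \<in> W" for u
  proof -
    have "\<not> W \<subseteq> U - {u}" using that by blast
    then show ?thesis by (simp add: tau_coeff_eq_0_if_not_subset)
  qed
  then have "(\<Sum>u\<in>U - {a, d}. ?f u) = (\<Sum>u\<in>?Y - {a, d}. ?f u)"
    using assms(1) by (intro sum.mono_neutral_right) auto
  moreover have "?f u = (if even (card ?Y) then ?c * (-1) ^ card {y\<in>?Y. y \<le> u} else 0)"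
    if "u \<in> ?Y" for u
    using tau_coeff_delete_outside[OF assms(1,2) that, of q] by (simp add: power_add mult_ac)
  ultimately have "(\<Sum>u\<in>U - {a, d}. ?f u) = (\<Sum>u\<in>?Y - {a, d}.
      if even (card ?Y) then ?c * (-1) ^ card {y\<in>?Y. y \<le> u} else 0)"
    by simp
  also have "\<dots> = (if even (card ?Y) then ?c * (\<Sum>u\<in>?Y - {a, d}. (-1) ^ card {y\<in>?Y. y \<le> u}) else 0)"
    by (simp add: sum_distrib_left)
  also have "\<dots> = (if even (card ?Y) then ?c * (of_bool (a \<in> ?Y) - of_bool (d \<in> ?Y)) else 0)"
    using sum_neg_one_pow_rank_interior[where 'r = 'r, of ?Y a d] assms by auto
  finally show ?thesis .
qed

lemma tau_coeff_delete_ends_max_inside: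
  fixes q :: "'r::comm_ring_1"
  assumes "finite U" "W \<subseteq> U" "a \<in> U - W" "d \<in> W" "\<forall>x\<in>U. a \<le> x \<and> x \<le> d"
  shows "tau_coeff q (U - {a, d}) (W - {d}) =
    (if even (card (U - W))
     then (-1) ^ inversions U W * (- q) ^ ((card (U - W) - 2) div 2) else 0)"
proof -
  have none_above: "{y\<in>U - W. d < y} = {}" and none_below: "{w\<in>W - {d}. w < a} = {}"
    using assms by force+
  have "inversions U W = inversions (U - {d}) (W - {d})"
    using inversions_delete_inside[OF assms(1,2,4)] unfolding none_above by simp
  also have "\<dots> = inversions (U - {d} - {a}) (W - {d})"
    using inversions_delete_outside[of "U - {d}" a "W - {d}"] assms unfolding none_below by auto
  finally have "inversions U W = inversions (U - {d} - {a}) (W - {d})" .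
  moreover have "U - {d} - {a} = U - {a, d}" by auto
  moreover have "U - {a, d} - (W - {d}) = (U - W) - {a}" "W - {d} \<subseteq> U - {a, d}"
    using assms by auto
  moreover have "card (U - W - {a}) = card (U - W) - 1" "card (U - W) \<ge> 1"
    using assms by (auto intro: Suc_leI simp: card_gt_0_iff)
  moreover have "odd (card (U - W) - 1) = even (card (U - W))" "card (U - W) - 1 - 1 = card (U - W) - 2"
    using \<open>card (U - W) \<ge> 1\<close> by auto
  ultimately show ?thesis by (simp add: tau_coeff_def)
qed

lemma tau_coeff_delete_ends_min_inside:
  fixes q :: "'r::comm_ring_1"
  assumes "finite U" "W \<subseteq> U" "a \<in> W" "d \<in> U - W" "\<forall>x\<in>U. a \<le> x \<and> x \<le> d"
  shows "(-1) ^ card U * tau_coeff q (U - {a, d}) (W - {a}) =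
    (if even (card (U - W))
     then - ((-1) ^ inversions U W * (- q) ^ ((card (U - W) - 2) div 2)) else 0)"
proof -
  let ?inv' = "inversions (U - {a, d}) (W - {a})"
  have fW: "finite W" using assms finite_subset by blast
  have "card W \<ge> 1" using fW assms(3) by (auto intro: Suc_leI simp: card_gt_0_iff)
  have all_above: "{y\<in>U - W. a < y} = U - W" and all_below: "{w\<in>W - {a}. w < d} = W - {a}"
    using assms by (auto simp: le_less)
  have "inversions U W = inversions (U - {a}) (W - {a}) + card (U - W)"
    using inversions_delete_inside[OF assms(1,2,3)] unfolding all_above .
  also have "inversions (U - {a}) (W - {a}) = ?inv' + card (W - {a})"
    using inversions_delete_outside[of "U - {a}" d "W - {a}"] assms unfolding all_below
    by (auto simp: insert_commute set_diff_eq)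
  finally have "card U + ?inv' = Suc (inversions U W)"
    using \<open>card W \<ge> 1\<close> assms fW card_Diff_subset[OF fW assms(2)] card_mono[OF assms(1,2)]
    by simp
  then have sign: "(-1) ^ card U * (-1) ^ ?inv' = - ((-1) ^ inversions U W :: 'r)"
    by (simp flip: power_add)
  have "U - {a, d} - (W - {a}) = (U - W) - {d}" "W - {a} \<subseteq> U - {a, d}"
    using assms by auto
  moreover have "card (U - W - {d}) = card (U - W) - 1" "card (U - W) \<ge> 1"
    using assms by (auto intro: Suc_leI simp: card_gt_0_iff)
  moreover have "odd (card (U - W) - 1) = even (card (U - W))" "card (U - W) - 1 - 1 = card (U - W) - 2"
    using \<open>card (U - W) \<ge> 1\<close> by auto
  ultimately show ?thesis using sign
    by (simp add: tau_coeff_def mult.assoc[symmetric])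
qed

lemma sum_tau_coeff_delete_interior_eq_ends:
  fixes q :: "'r::comm_ring_1"
  assumes "finite U" "a \<in> U" "d \<in> U" "a < d" "\<forall>x\<in>U. a \<le> x \<and> x \<le> d"
  shows "(\<Sum>u\<in>U - {a, d}. (-1) ^ card {x\<in>U. x \<le> u} * tau_coeff q (U - {u}) W) =
    (if d \<in> W then tau_coeff q (U - {a, d}) (W - {d}) else 0)
    + (-1) ^ card U * (if a \<in> W then tau_coeff q (U - {a, d}) (W - {a}) else 0)"
proof (cases "W \<subseteq> U")
  case False
  then obtain z where z: "z \<in> W" "z \<notin> U" by blast
  have "tau_coeff q X V = 0" if "z \<in> V" "z \<notin> X" for X V
    using that by (blast intro: tau_coeff_eq_0_if_not_subset)
  moreover have "z \<noteq> a" "z \<noteq> d" using z assms(2,3) by auto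
  ultimately show ?thesis using z by auto
next
  case True
  have "a \<in> W \<Longrightarrow> \<not> W - {d} \<subseteq> U - {a, d}" "d \<in> W \<Longrightarrow> \<not> W - {a} \<subseteq> U - {a, d}"
    using assms(4) by auto
  then have "a \<in> W \<Longrightarrow> tau_coeff q (U - {a, d}) (W - {d}) = 0"
    "d \<in> W \<Longrightarrow> tau_coeff q (U - {a, d}) (W - {a}) = 0"
    by (simp_all add: tau_coeff_eq_0_if_not_subset)
  then show ?thesis
    using sum_tau_coeff_delete_interior[OF assms(1) True assms(4,5), of q]
      tau_coeff_delete_ends_max_inside[OF assms(1) True _ _ assms(5), of q]
      tau_coeff_delete_ends_min_inside[OF assms(1) True _ _ assms(5), of q] assms(2,3)
    by (cases "a \<in> W"; cases "d \<in> W") auto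
qed

lemma fa_mult_tJ_singleton_right:
  "fa_mult f (tJ {d}) w = (if w \<noteq> [] \<and> last w = d then f (butlast w) else (0::'r::comm_ring_1))"
proof (cases w rule: rev_exhaust)
  case Nil
  then show ?thesis by (simp add: fa_mult_def tJ_def fa_mono_def)
next
  case (snoc xs x)
  have "(drop k (xs @ [x]) = [d]) = (k = length xs \<and> x = d)" if "k \<le> Suc (length xs)" for k
    using that by (cases "k \<le> length xs") (auto simp: le_Suc_eq)
  then have "fa_mult f (tJ {d}) w = (\<Sum>k\<le>Suc (length xs). if k = length xs \<and> x = d then f xs else 0)"
    unfolding fa_mult_def tJ_def fa_mono_def snoc by (intro sum.cong) auto
  then show ?thesis using snoc by (simp add: sum.delta)
qed

lemma fa_mult_tJ_singleton_left:
  "fa_mult (tJ {a}) f w = (if w \<noteq> [] \<and> hd w = a then f (tl w) else (0::'r::comm_ring_1))"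
proof (cases w)
  case Nil
  then show ?thesis by (simp add: fa_mult_def tJ_def fa_mono_def)
next
  case (Cons x xs)
  have "(take k (x # xs) = [a]) = (k = 1 \<and> x = a)" if "k \<le> Suc (length xs)" for k
    using that by (cases k) (auto simp: take_Cons')
  then have "fa_mult (tJ {a}) f w = (\<Sum>k\<le>Suc (length xs). if k = 1 then (if x = a then f xs else 0) else 0)"
    unfolding fa_mult_def tJ_def fa_mono_def Cons by (intro sum.cong) auto
  then show ?thesis using Cons by (subst (asm) sum.delta) auto
qed

lemma fa_mult_tau_minus_tJ_above:
  fixes q :: "'r::comm_ring_1"
  assumes "finite L" "\<forall>x\<in>L. x < d"
  shows "fa_mult (tau_minus q L) (tJ {d}) w =
    (if sorted_wrt (<) w \<and> d \<in> set w then tau_coeff q L (set w - {d}) else 0)"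
proof (cases w rule: rev_exhaust)
  case Nil
  then show ?thesis by (simp add: fa_mult_tJ_singleton_right)
next
  case (snoc xs x)
  show ?thesis
  proof (cases "x = d")
    case True
    have "tau_coeff q L (set xs) = 0" if "\<not> (\<forall>y\<in>set xs. y < d)"
      using that assms(2) by (intro tau_coeff_eq_0_if_not_subset) auto
    moreover have "set w - {d} = set xs" if "\<forall>y\<in>set xs. y < d"
      using that snoc True by auto
    ultimately show ?thesis
      using snoc True by (auto simp: fa_mult_tJ_singleton_right tau_minus_apply[OF assms(1)] sorted_wrt_append)
  next
    case False
    have "tau_coeff q L (set w - {d}) = 0" if "sorted_wrt (<) w" "d \<in> set w"
    proof (rule tau_coeff_eq_0_if_not_subset)
      have "d < x" using that snoc False by (auto simp: sorted_wrt_append)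
      then have "x \<notin> L" using assms(2) by auto
      moreover have "x \<in> set w - {d}" using snoc False by auto
      ultimately show "\<not> set w - {d} \<subseteq> L" by blast
    qed
    then show ?thesis using snoc False by (auto simp: fa_mult_tJ_singleton_right)
  qed
qed

lemma fa_mult_tJ_tau_minus_below:
  fixes q :: "'r::comm_ring_1"
  assumes "finite L" "\<forall>x\<in>L. a < x"
  shows "fa_mult (tJ {a}) (tau_minus q L) w =
    (if sorted_wrt (<) w \<and> a \<in> set w then tau_coeff q L (set w - {a}) else 0)"
proof (cases w)
  case Nil
  then show ?thesis by (simp add: fa_mult_tJ_singleton_left)
next
  case (Cons x xs)
  show ?thesis
  proof (cases "x = a")
    case True
    have "tau_coeff q L (set xs) = 0" if "\<not> (\<forall>y\<in>set xs. a < y)"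
      using that assms(2) by (intro tau_coeff_eq_0_if_not_subset) auto
    moreover have "set w - {a} = set xs" if "\<forall>y\<in>set xs. a < y"
      using that Cons True by auto
    ultimately show ?thesis
      using Cons True by (auto simp: fa_mult_tJ_singleton_left tau_minus_apply[OF assms(1)])
  next
    case False
    have "tau_coeff q L (set w - {a}) = 0" if "sorted_wrt (<) w" "a \<in> set w"
    proof (rule tau_coeff_eq_0_if_not_subset)
      have "x < a" using that Cons False by auto
      then have "x \<notin> L" using assms(2) by auto
      moreover have "x \<in> set w - {a}" using Cons False by auto
      ultimately show "\<not> set w - {a} \<subseteq> L" by blast
    qed
    then show ?thesis using Cons False by (auto simp: fa_mult_tJ_singleton_left)
  qed
qed

theorem tau_minus_delete_interior:
  fixes q :: "'r::comm_ring_1"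
  assumes "finite U" "a \<in> U" "d \<in> U" "a < d" "\<forall>x\<in>U. a \<le> x \<and> x \<le> d"
  shows "fa_sum (\<lambda>u. fa_smult ((-1) ^ card {x\<in>U. x \<le> u}) (tau_minus q (U - {u}))) (U - {a, d}) =
    fa_add (fa_mult (tau_minus q (U - {a, d})) (tJ {d}))
      (fa_smult ((-1) ^ card U) (fa_mult (tJ {a}) (tau_minus q (U - {a, d}))))"
proof
  fix w
  have "\<forall>x\<in>U - {a, d}. x < d" "\<forall>x\<in>U - {a, d}. a < x"
    using assms(5) by (auto simp: le_less)
  then show "fa_sum (\<lambda>u. fa_smult ((-1) ^ card {x\<in>U. x \<le> u}) (tau_minus q (U - {u}))) (U - {a, d}) w =
    fa_add (fa_mult (tau_minus q (U - {a, d})) (tJ {d}))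
      (fa_smult ((-1) ^ card U) (fa_mult (tJ {a}) (tau_minus q (U - {a, d})))) w"
    using sum_tau_coeff_delete_interior_eq_ends[OF assms, of q "set w"] assms(1)
    by (cases "sorted_wrt (<) w") (simp_all add: fa_sum_def fa_add_def fa_smult_def
        tau_minus_apply fa_mult_tau_minus_tJ_above fa_mult_tJ_tau_minus_below)
qed

lemma tau_minus_insert_between:
  fixes q :: "'r::comm_ring_1"
  assumes fJ: "finite J" and n: "n = card J" "3 \<le> n"
    and b: "Min J < b" "\<forall>x\<in>J - {Min J}. b < x"
  defines "L \<equiv> insert b (J - {Min J, Max J})"
  shows "tau_minus q J w - (\<Sum>i\<in>{2..n - 1}. (-1) ^ i * tau_minus q (insert b J - {elt J i}) w) =
    fa_mult (tau_minus q L) (tJ {Max J}) w - (-1) ^ n * fa_mult (tJ {Min J}) (tau_minus q L) w"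
proof -
  let ?U = "insert b J" and ?a = "Min J" and ?d = "Max J"
  let ?f = "\<lambda>u. (-1) ^ card {x\<in>?U. x \<le> u} * tau_minus q (?U - {u}) w"
  have J_ne: "J \<noteq> {}" using n by auto
  have "card (J - {?a}) \<noteq> 0" using n Min_in[OF fJ J_ne] by simp
  then obtain x where x: "x \<in> J" "x \<noteq> ?a"
    using fJ by (metis card_0_eq Diff_iff finite_Diff insertCI ex_in_conv)
  have "?a < x" using Min_le[OF fJ x(1)] x(2) by (simp add: le_neq_trans)
  moreover have "b < x" using b x by blast
  moreover have "x \<le> ?d" using Max_ge[OF fJ x(1)] .
  ultimately have ad: "?a < ?d" and bd: "b < ?d" by simp_all
  have bJ: "b \<notin> J" using b by auto
  have bounds: "\<forall>x\<in>?U. ?a \<le> x \<and> x \<le> ?d" using fJ J_ne b bd by auto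
  have UL: "?U - {?a, ?d} = insert b (J - {?a, ?d})" using b bd by auto
  have card_U: "card ?U = Suc n" using fJ bJ n by simp
  have "fa_sum (\<lambda>u. fa_smult ((-1) ^ card {x\<in>?U. x \<le> u}) (tau_minus q (?U - {u}))) L w =
      fa_add (fa_mult (tau_minus q L) (tJ {?d})) (fa_smult ((-1) ^ card ?U) (fa_mult (tJ {?a}) (tau_minus q L))) w"
    unfolding L_def UL[symmetric] using fJ Min_in[OF fJ J_ne] Max_in[OF fJ J_ne] ad bounds
    by (intro fun_cong[OF tau_minus_delete_interior]) auto
  then have "(\<Sum>u\<in>L. ?f u) = fa_mult (tau_minus q L) (tJ {?d}) w + (-1) ^ Suc n * fa_mult (tJ {?a}) (tau_minus q L) w"
    unfolding fa_sum_def fa_add_def fa_smult_def card_U .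
  moreover have "(\<Sum>u\<in>L. ?f u) = tau_minus q J w + (\<Sum>u\<in>J - {?a, ?d}. ?f u)"
  proof -
    have "{x\<in>?U. x \<le> b} = {?a, b}" using b Min_in[OF fJ J_ne] by (auto dest: leD)
    then have "card {x\<in>?U. x \<le> b} = 2" using b by simp
    moreover have "?U - {b} = J" using bJ by simp
    ultimately have f_b: "?f b = tau_minus q J w" by simp
    have "finite (J - {?a, ?d})" "b \<notin> J - {?a, ?d}" using bJ fJ by simp_all
    then have "(\<Sum>u\<in>insert b (J - {?a, ?d}). ?f u) = ?f b + (\<Sum>u\<in>J - {?a, ?d}. ?f u)"
      by (rule sum.insert)
    then show ?thesis unfolding L_def f_b .
  qed
  moreover have "(\<Sum>u\<in>J - {?a, ?d}. ?f u) = - (\<Sum>i\<in>{2..n - 1}. (-1) ^ i * tau_minus q (?U - {elt J i}) w)"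
  proof -
    have bij: "bij_betw (elt J) {2..n - 1} (J - {?a, ?d})"
      using bij_betw_elt_interior[OF fJ] n by simp
    have "card {x\<in>?U. x \<le> elt J i} = Suc i" if "i \<in> {2..n - 1}" for i
    proof -
      have "elt J i \<in> J - {?a, ?d}" using bij_betw_apply[OF bij that] .
      then have "b < elt J i" using b(2) by blast
      then have "{x\<in>?U. x \<le> elt J i} = insert b {x\<in>J. x \<le> elt J i}" by auto
      then show ?thesis using card_le_elt[OF fJ, of i] that fJ bJ n by auto
    qed
    then show ?thesis
      unfolding sum.reindex_bij_betw[OF bij, symmetric] by (simp flip: sum_negf)
  qed
  ultimately show ?thesis by (simp add: algebra_simps)
qed

lemma fa_mult_mono_Nil_right: "fa_mult f (fa_mono []) = (f :: ('a, 'r::comm_ring_1) falg)"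
proof
  fix w :: "'a list"
  have "fa_mult f (fa_mono []) w = (\<Sum>k\<le>length w. if k = length w then f w else 0)"
    unfolding fa_mult_def fa_mono_def by (intro sum.cong) auto
  then show "fa_mult f (fa_mono []) w = f w" by simp
qed

lemma fa_mult_mono_Nil_left: "fa_mult (fa_mono []) f = (f :: ('a, 'r::comm_ring_1) falg)"
proof
  fix w :: "'a list"
  have "fa_mult (fa_mono []) f w = (\<Sum>k\<le>length w. if k = 0 then f w else 0)"
    unfolding fa_mult_def fa_mono_def by (intro sum.cong) auto
  then show "fa_mult (fa_mono []) f w = f w" by simp
qed

lemma sorted_wrt_less_eq_singleton_iff:
  fixes w :: "'a::linorder list"
  assumes "sorted_wrt (<) w"
  shows "set w = {x} \<longleftrightarrow> w = [x]"
proof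
  assume "set w = {x}"
  moreover have "sorted_list_of_set (set w) = w"
    using assms by (simp add: sorted_list_of_set.idem_if_sorted_distinct strict_sorted_iff)
  ultimately show "w = [x]" by simp
qed simp

lemma tau_minus_singleton: "tau_minus q {b} = fa_mono []"
proof
  fix w
  have "tau_coeff q {b} W = (if W = {} then 1 else 0)" for W
    by (auto simp: tau_coeff_def inversions_def subset_singleton_iff)
  then show "tau_minus q {b} w = fa_mono [] w"
    by (auto simp: tau_minus_apply fa_mono_def)
qed

lemma tau_minus_pair:
  assumes "a < d"
  shows "tau_minus q {a, d} = fa_sub (tJ {d}) (tJ {a})"
proof
  fix w
  have diff: "{a, d} - {a} = {d}" "{a, d} - {d} = {a}"
    and below: "{w\<in>{a}. w < d} = {a}" "{w\<in>{d}. w < a} = {}"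
    using assms by auto
  have "inversions {a, d} {a} = card {w\<in>{a}. w < d}" "inversions {a, d} {d} = card {w\<in>{d}. w < a}"
    unfolding inversions_def diff by simp_all
  then have "inversions {a, d} {a} = 1" "inversions {a, d} {d} = 0"
    unfolding below by simp_all
  then have vals: "tau_coeff q {a, d} {d} = 1" "tau_coeff q {a, d} {a} = -1"
    unfolding tau_coeff_def diff by simp_all
  have "tau_coeff q {a, d} {} = 0" "tau_coeff q {a, d} {a, d} = 0"
    using assms by (simp_all add: tau_coeff_def)
  note vals = vals this
  have coeff: "tau_coeff q {a, d} W = (if W = {d} then 1 else if W = {a} then -1 else 0)" for W
  proof (cases "W \<subseteq> {a, d}")
    case True
    then consider "W = {}" | "W = {a}" | "W = {d}" | "W = {a, d}" by blast
    then show ?thesis using assms vals by cases auto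
  next
    case False
    then have "W \<noteq> {d}" "W \<noteq> {a}" by auto
    then show ?thesis using False tau_coeff_eq_0_if_not_subset by simp
  qed
  then show "tau_minus q {a, d} w = fa_sub (tJ {d}) (tJ {a}) w"
    using assms
    by (cases "sorted_wrt (<) w")
      (auto simp: tau_minus_apply fa_sub_def tJ_def fa_mono_def sorted_wrt_less_eq_singleton_iff)
qed

lemma Min_less_if_interiors_eq:
  fixes J L :: "'a::linorder set"
  assumes "finite J" "finite L" "3 \<le> card J" "J - {Min J, Max J} = L - {Min L}"
  shows "\<forall>x\<in>J - {Min J}. Min L < x"
proof
  have "J \<noteq> {}" using assms(3) by auto
  then have "{Min J, Max J} \<subseteq> J" using assms(1) by simp
  moreover have "card {Min J, Max J} \<le> 2" by (cases "Min J = Max J") simp_all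
  ultimately have "card (J - {Min J, Max J}) \<noteq> 0"
    using assms(1,3) card_Diff_subset[of "{Min J, Max J}" J] finite_subset by auto
  then obtain c where c: "c \<in> L - {Min L}" "c \<in> J - {Min J, Max J}"
    using assms(4) by (metis card.empty ex_in_conv)
  have "Min L < c" using c(1) Min_le[OF assms(2)] by (auto simp: le_neq_trans)
  fix x assume x: "x \<in> J - {Min J}"
  show "Min L < x"
  proof (cases "x = Max J")
    case True
    then show ?thesis using \<open>Min L < c\<close> Max_ge[OF assms(1)] c(2) by (auto intro: less_le_trans)
  next
    case False
    then have "x \<in> L - {Min L}" using x assms(4) by blast
    then show ?thesis using Min_le[OF assms(2)] by (auto simp: le_neq_trans)
  qed
qed

theorem lemma3p3:
  fixes S :: "'a::linorder set" and q :: "'r::comm_ring_1" and J L :: "'a set" and n :: nat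
  assumes "finite S" and "J \<subseteq> S" and "L \<subseteq> S"
    and "n = card J" and "n \<ge> 2" and "L \<noteq> {}"
    and "J - {elt J 1, elt J n} = L - {elt L 1}"
    and "elt J 1 < elt L 1"
  shows "fa_add
           (fa_sub
             (fa_sub (tau_minus q J) (fa_mult (tau_minus q L) (tJ {elt J n})))
             (fa_sum (\<lambda>i. fa_smult ((-1) ^ i) (tau_minus q ((J \<union> L) - {elt J i}))) {2..n-1}))
           (fa_smult ((-1) ^ n) (fa_mult (tJ {elt J 1}) (tau_minus q L)))
         = (fa_zero :: ('a, 'r) falg)"
proof -
  have fin: "finite J" "finite L" using assms(1-3) finite_subset by auto
  have "J \<noteq> {}" using assms(4,5) by auto
  then have ends: "elt J 1 = Min J" "elt J n = Max J" "elt L 1 = Min L"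
    using elt_1_eq_Min[OF fin(1)] elt_card_eq_Max[OF fin(1)] elt_1_eq_Min[OF fin(2) assms(6)] assms(4)
    by simp_all
  have mid: "J - {Min J, Max J} = L - {Min L}"
    using assms(7) unfolding ends .
  have L: "L = insert (Min L) (J - {Min J, Max J})"
    unfolding mid using Min_in[OF fin(2) assms(6)] by (rule insert_Diff[symmetric])
  have between: "tau_minus q J w - (\<Sum>i\<in>{2..n - 1}. (-1) ^ i * tau_minus q (J \<union> L - {elt J i}) w) =
      fa_mult (tau_minus q L) (tJ {Max J}) w - (-1) ^ n * fa_mult (tJ {Min J}) (tau_minus q L) w" for w
  proof (cases "n = 2")
    case True
    then obtain a d where J: "J = {a, d}" "a < d"
      using assms(4) by (auto simp: card_2_iff neq_iff insert_commute)
    moreover obtain b where "L = {b}" using L J by auto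
    ultimately show ?thesis
      using True by (simp add: tau_minus_pair tau_minus_singleton fa_mult_mono_Nil_left
          fa_mult_mono_Nil_right fa_sub_def)
  next
    case False
    have JL: "insert (Min L) J = J \<union> L" using L by blast
    have "3 \<le> card J" using False assms(4,5) by simp
    then have "\<forall>x\<in>J - {Min J}. Min L < x" using Min_less_if_interiors_eq fin mid by blast
    moreover have "Min J < Min L" using assms(8) unfolding ends .
    ultimately show ?thesis
      using tau_minus_insert_between[OF fin(1) assms(4), of "Min L" q w] False assms(5)
      unfolding JL L[symmetric] by simp
  qed
  show ?thesis
    unfolding ends fa_add_def fa_sub_def fa_sum_def fa_smult_def fa_zero_def
    using between by (intro ext) (simp add: algebra_simps)
qed

end
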